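(* Let $S$ be a commutative ring, $p,q\in S$, $A=\begin{pmatrix}0&q\\-p&0\end{pmatrix}\in R=\mathbb{M}_2(S)$, and let $c\in S$ be a non-zero-divisor. The following are equivalent: (1) $c\in V[p,q]$, i.e. $c=pr^2+qs^2$ for some $r,s\in S$; (2) there exist $X,Y\in R$ with $XY=cA$, $\det(X)=cp$, $\det(Y)=cq$, and $\det[X,Y]=-c^2$; (3) there exist $X_1,Y_1\in R$ with $X_1Y_1=cA$, $\det(X_1)=cq$, $\det(Y_1)=cp$, and $\det[X_1,Y_1]=-c^2$. (The implications (1)⇒(2) and (2)⇒(3) hold without assuming $c$ is a non-zero-divisor.)
   Context: $[X,Y]=XY-YX$. $V[p,q]=\{pr_1^2+qr_2^2: r_1,r_2\in S\}$. *)

theory Defs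
  imports "HOL-Analysis.Analysis"
begin

definition commutator :: "'a::comm_ring_1 ^ 'n ^ 'n \<Rightarrow> 'a ^ 'n ^ 'n \<Rightarrow> 'a ^ 'n ^ 'n" where
  "commutator X Y = X ** Y - Y ** X"

definition Vset :: "'a::comm_ring_1 \<Rightarrow> 'a \<Rightarrow> 'a set" where
  "Vset p q = {p * r1^2 + q * r2^2 | r1 r2. True}"

definition matA :: "'a::comm_ring_1 \<Rightarrow> 'a \<Rightarrow> 'a ^ 2 ^ 2" where
  "matA p q = vector [vector [0, q], vector [- p, 0]]"

definition non_zero_divisor :: "'a::comm_ring_1 \<Rightarrow> bool" where
  "non_zero_divisor c \<longleftrightarrow> (\<forall>x. c * x = 0 \<longrightarrow> x = 0)"

definition smult_mat :: "'a::comm_ring_1 \<Rightarrow> 'a ^ 'n ^ 'm \<Rightarrow> 'a ^ 'n ^ 'm" where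
  "smult_mat c A = (\<chi> i j. c * A $ i $ j)"

end

theory Submission
  imports Defs
begin

(* (2) <-> (3): for any involution J (J^2 = 1) the anti-automorphism
   M |-> J M^T J reverses products, preserves determinants and sends [X,Y] to
   [J Y^T J, J X^T J].  For the swap matrix J = [[0,1],[1,0]] it fixes A, so it turns
   a realisation of (c, A, cp, cq) into one of (c, A, cq, cp) and back.

   (2) -> (1): writing X = [[a,b],[d,e]], Y = [[f,g],[h,k]], the defining
   equations imply the polynomial identity c (p (b-k)^2 + q (a-e)^2 - c) = 0 in
   any commutative ring; cancelling the non-zero-divisor c gives c in V[p,q]. *)

definition reflect :: "'a::comm_ring_1 ^ 'n ^ 'n \<Rightarrow> 'a ^ 'n ^ 'n \<Rightarrow> 'a ^ 'n ^ 'n" where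
  "reflect J M = J ** transpose M ** J"

lemma reflect_mult:
  assumes "J ** J = mat 1"
  shows "reflect J (M ** N) = reflect J N ** reflect J M"
proof -
  have "reflect J N ** reflect J M = J ** transpose N ** (J ** J) ** transpose M ** J"
    unfolding reflect_def by (simp add: matrix_mul_assoc)
  also have "\<dots> = reflect J (M ** N)"
    using assms unfolding reflect_def by (simp add: matrix_transpose_mul matrix_mul_assoc)
  finally show ?thesis ..
qed

lemma reflect_diff: "reflect J (M - N) = reflect J M - reflect J N"
  by (simp add: reflect_def matrix_matrix_mult_def transpose_def vec_eq_iff
      sum_subtractf algebra_simps)

lemma reflect_smult: "reflect J (smult_mat c M) = smult_mat c (reflect J M)"
  by (simp add: reflect_def smult_mat_def matrix_matrix_mult_def transpose_def vec_eq_iff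
      sum_distrib_left algebra_simps)

(* det J is a unit squaring to 1, so reflection preserves determinants. *)
lemma det_reflect:
  assumes "J ** J = mat 1"
  shows "det (reflect J M) = det M"
proof -
  have "det (reflect J M) = det M * (det J * det J)"
    by (simp add: reflect_def det_mul mult_ac)
  also have "det J * det J = 1"
    using assms by (metis det_mul det_I)
  finally show ?thesis by simp
qed

lemma commutator_reflect:
  assumes "J ** J = mat 1"
  shows "commutator (reflect J Y) (reflect J X) = reflect J (commutator X Y)"
  using assms by (simp add: commutator_def reflect_diff reflect_mult)

definition comm_factorization ::
    "'a::comm_ring_1 \<Rightarrow> 'a ^ 'n ^ 'n \<Rightarrow> 'a \<Rightarrow> 'a \<Rightarrow> 'a ^ 'n ^ 'n \<Rightarrow> 'a ^ 'n ^ 'n \<Rightarrow> bool" where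
  "comm_factorization c M u v X Y \<longleftrightarrow>
     X ** Y = smult_mat c M \<and> det X = u \<and> det Y = v \<and> det (commutator X Y) = - (c^2)"

lemma comm_factorization_reflect:
  assumes J: "J ** J = mat 1" and M: "reflect J M = M"
    and XY: "comm_factorization c M u v X Y"
  shows "comm_factorization c M v u (reflect J Y) (reflect J X)"
  using XY unfolding comm_factorization_def
  by (simp add: reflect_mult[OF J, symmetric] reflect_smult M det_reflect[OF J]
      commutator_reflect[OF J])

definition mat2 :: "'a \<Rightarrow> 'a \<Rightarrow> 'a \<Rightarrow> 'a \<Rightarrow> 'a::comm_ring_1 ^ 2 ^ 2" where
  "mat2 a b d e = vector [vector [a, b], vector [d, e]]"

lemma mat2_eq_iff:
  "mat2 a b d e = mat2 a' b' d' e' \<longleftrightarrow> a = a' \<and> b = b' \<and> d = d' \<and> e = e'"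
  by (auto simp: mat2_def vec_eq_iff forall_2)

lemma mat2_eta: "(X :: 'a::comm_ring_1 ^ 2 ^ 2) = mat2 (X$1$1) (X$1$2) (X$2$1) (X$2$2)"
  by (simp add: mat2_def vec_eq_iff forall_2)

lemma mat2_mult:
  "mat2 a b d e ** mat2 f g h k = mat2 (a*f + b*h) (a*g + b*k) (d*f + e*h) (d*g + e*k)"
  by (simp add: mat2_def matrix_matrix_mult_def vec_eq_iff forall_2 sum_2)

lemma mat2_diff: "mat2 a b d e - mat2 f g h k = mat2 (a - f) (b - g) (d - h) (e - k)"
  by (simp add: mat2_def vec_eq_iff forall_2)

lemma det_mat2: "det (mat2 a b d e) = a*e - b*d"
  by (simp add: mat2_def det_2)

lemma smult_mat2: "smult_mat c (mat2 a b d e) = mat2 (c*a) (c*b) (c*d) (c*e)"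
  by (simp add: mat2_def smult_mat_def vec_eq_iff forall_2)

lemma matA_mat2: "matA p q = mat2 0 q (- p) 0"
  by (simp add: matA_def mat2_def)

lemma reflect_swap_mat2: "reflect (mat2 0 1 1 0) (mat2 a b d e) = mat2 e b d a"
  by (simp add: reflect_def mat2_def matrix_matrix_mult_def transpose_def vec_eq_iff forall_2 sum_2)

lemma swap_involution: "mat2 0 1 1 (0::'a::comm_ring_1) ** mat2 0 1 1 0 = mat 1"
  by (simp add: mat2_def matrix_matrix_mult_def mat_def vec_eq_iff forall_2 sum_2)

lemma comm_factorization_mat2:
  "comm_factorization c (matA p q) u v (mat2 a b d e) (mat2 f g h k) \<longleftrightarrow>
     a*f + b*h = 0 \<and> a*g + b*k = c*q \<and> d*f + e*h = - (c*p) \<and> d*g + e*k = 0 \<and>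
     a*e - b*d = u \<and> f*k - g*h = v \<and>
     (a*f + b*h - (f*a + g*d)) * (d*g + e*k - (h*b + k*e))
       - (a*g + b*k - (f*b + g*e)) * (d*f + e*h - (h*a + k*d)) = - (c^2)"
  by (simp add: comm_factorization_def commutator_def mat2_mult matA_mat2 smult_mat2
      mat2_eq_iff mat2_diff det_mat2)

lemma matA_reflect_swap: "reflect (mat2 0 1 1 0) (matA p q) = matA p q"
  by (simp add: matA_mat2 reflect_swap_mat2)

lemma comm_factorization_swap:
  assumes "comm_factorization c (matA p q) u v X Y"
  shows "\<exists>X1 Y1. comm_factorization c (matA p q) v u X1 Y1"
  using comm_factorization_reflect[OF swap_involution matA_reflect_swap assms] by blast

lemma comm_factorization_of_Vset:
  fixes p q r s :: "'a::comm_ring_1"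
  defines "c \<equiv> p * r^2 + q * s^2"
  shows "comm_factorization c (matA p q) (c*p) (c*q)
           (mat2 (p*r + s) (q * s - r) (- (p * s)) (p*r)) (mat2 (q * s - r) (q*r) (- (p*r + s)) (q * s))"
  unfolding comm_factorization_mat2 c_def
  by (intro conjI; simp add: algebra_simps power2_eq_square)

(* Key identity behind (2) -> (1), valid in every commutative ring: each of the
   relations r1-r4 (pY = adj(X) A and qX = A adj(Y) up to a factor c) and the
   trace relation (from det [X,Y] = -c^2 and det(YX) = c^2 pq) is c times a
   combination of the hypotheses, and they combine to c (p r^2 + q s^2 - c)
   with r = b - k, s = a - e. *)
lemma sum_of_squares_defect:
  fixes a b d e f g h k c p q :: "'a::comm_ring_1"
  assumes e1: "a*f + b*h = 0" and e2: "a*g + b*k = c*q" and e3: "d*f + e*h = - (c*p)"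
    and e4: "d*g + e*k = 0" and e5: "a*e - b*d = c*p" and e6: "f*k - g*h = c*q"
    and e7: "(a*f + b*h - (f*a + g*d)) * (d*g + e*k - (h*b + k*e))
               - (a*g + b*k - (f*b + g*e)) * (d*f + e*h - (h*a + k*d)) = - (c^2)"
  shows "c * (p*(b - k)^2 + q*(a - e)^2 - c) = 0"
proof -
  have r1: "c*(p*f - p*b) = 0"
  proof -
    have "c*(p*f - p*b) = e*(a*f + b*h) - f*(a*e - b*d - c*p) - b*(d*f + e*h + c*p)"
      by (simp add: algebra_simps)
    then show ?thesis using e1 e3 e5 by simp
  qed
  have r2: "c*(p*g - q*e) = 0"
  proof -
    have "c*(p*g - q*e) = g*(c*p - (a*e - b*d)) - e*(c*q - (a*g + b*k)) - b*(d*g + e*k)"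
      by (simp add: algebra_simps)
    then show ?thesis using e2 e4 e5 by simp
  qed
  have r3: "c*(q*h + q*a) = 0"
  proof -
    have "c*(q*h + q*a) = a*(c*q - (f*k - g*h)) + k*(a*f + b*h) + h*(c*q - (a*g + b*k))"
      by (simp add: algebra_simps)
    then show ?thesis using e1 e2 e6 by simp
  qed
  have r4: "c*(q*d + p*k) = 0"
  proof -
    have "c*(q*d + p*k) = d*(c*q - (f*k - g*h)) + k*(c*p + (d*f + e*h)) - h*(d*g + e*k)"
      by (simp add: algebra_simps)
    then show ?thesis using e3 e4 e6 by simp
  qed
  have trace: "c*(p*(f*b + g*e) - q*(h*a + k*d) - c - 2*c*p*q) = 0"
  proof -
    have "(f*a + g*d)*(h*b + k*e) - (f*b + g*e)*(h*a + k*d) = (f*k - g*h)*(a*e - b*d)"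
      by (simp add: algebra_simps)
    then have det_YX: "(f*a + g*d)*(h*b + k*e) - (f*b + g*e)*(h*a + k*d) = (c*q)*(c*p)"
      using e5 e6 by simp
    have "(f*a + g*d)*(h*b + k*e) + (c*q - (f*b + g*e))*(c*p + (h*a + k*d)) = - (c^2)"
      using e7 unfolding e1 e2 e3 e4 by (simp add: algebra_simps)
    moreover have "c*(p*(f*b + g*e) - q*(h*a + k*d) - c - 2*c*p*q) =
        ((f*a + g*d)*(h*b + k*e) - (f*b + g*e)*(h*a + k*d) - (c*q)*(c*p))
        - ((f*a + g*d)*(h*b + k*e) + (c*q - (f*b + g*e))*(c*p + (h*a + k*d)) + c^2)"
      by (simp add: algebra_simps power2_eq_square)
    ultimately show ?thesis using det_YX by simp
  qed
  have "c * (p*(b - k)^2 + q*(a - e)^2 - c) =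
      c*(p*(f*b + g*e) - q*(h*a + k*d) - c - 2*c*p*q) - b*(c*(p*f - p*b)) - e*(c*(p*g - q*e))
      + a*(c*(q*h + q*a)) + k*(c*(q*d + p*k)) - 2*b*(c*(q*d + p*k)) - 2*q*c*(a*e - b*d - c*p)"
    by (simp add: algebra_simps power2_eq_square)
  then show ?thesis using r1 r2 r3 r4 trace e5 by simp
qed

lemma Vset_of_comm_factorization:
  assumes c: "non_zero_divisor c"
    and XY: "comm_factorization c (matA p q) (c*p) (c*q) X Y"
  shows "c \<in> Vset p q"
proof -
  obtain a b d e f g h k where X: "X = mat2 a b d e" and Y: "Y = mat2 f g h k"
    using mat2_eta by metis
  have "c * (p*(b - k)^2 + q*(a - e)^2 - c) = 0"
    using XY unfolding X Y comm_factorization_mat2 by (intro sum_of_squares_defect) auto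
  then have "p*(b - k)^2 + q*(a - e)^2 - c = 0"
    using c unfolding non_zero_divisor_def by blast
  then have "c = p*(b - k)^2 + q*(a - e)^2"
    by simp
  then show ?thesis unfolding Vset_def by blast
qed

theorem theorem6p3:
  fixes p q c :: "'a::comm_ring_1"
  shows "(c \<in> Vset p q \<longrightarrow>
            (\<exists>X Y :: 'a ^ 2 ^ 2. X ** Y = smult_mat c (matA p q) \<and> det X = c * p \<and>
               det Y = c * q \<and> det (commutator X Y) = - (c^2)))
       \<and> ((\<exists>X Y :: 'a ^ 2 ^ 2. X ** Y = smult_mat c (matA p q) \<and> det X = c * p \<and>
               det Y = c * q \<and> det (commutator X Y) = - (c^2)) \<longrightarrow>
            (\<exists>X1 Y1 :: 'a ^ 2 ^ 2. X1 ** Y1 = smult_mat c (matA p q) \<and> det X1 = c * q \<and>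
               det Y1 = c * p \<and> det (commutator X1 Y1) = - (c^2)))
       \<and> (non_zero_divisor c \<longrightarrow>
            ((c \<in> Vset p q) \<longleftrightarrow>
               (\<exists>X Y :: 'a ^ 2 ^ 2. X ** Y = smult_mat c (matA p q) \<and> det X = c * p \<and>
                 det Y = c * q \<and> det (commutator X Y) = - (c^2)))
          \<and> ((c \<in> Vset p q) \<longleftrightarrow>
               (\<exists>X1 Y1 :: 'a ^ 2 ^ 2. X1 ** Y1 = smult_mat c (matA p q) \<and> det X1 = c * q \<and>
                 det Y1 = c * p \<and> det (commutator X1 Y1) = - (c^2))))"
proof -
  let ?P2 = "\<exists>X Y. comm_factorization c (matA p q) (c*p) (c*q) X Y"
  let ?P3 = "\<exists>X1 Y1. comm_factorization c (matA p q) (c*q) (c*p) X1 Y1"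
  have one_two: ?P2 if V: "c \<in> Vset p q"
  proof -
    obtain r s where "c = p * r^2 + q * s^2"
      using V unfolding Vset_def by blast
    then show ?thesis using comm_factorization_of_Vset[of p r q s] by blast
  qed
  have two_three: "?P2 \<longleftrightarrow> ?P3"
    using comm_factorization_swap by blast
  have two_one: "c \<in> Vset p q" if "non_zero_divisor c" and ?P2
    using that Vset_of_comm_factorization by blast
  show ?thesis
    using one_two two_three two_one unfolding comm_factorization_def by blast
qed

end
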